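(* Let $G$ be a finite group and let $p\in\pi(G)$ be a prime with $p\in\mu(G)$. Then $p^{p-2}$ divides $\kappa(G)$.
   Context: For a finite group $G$, the power graph $\mathcal{P}(G)$ is the simple undirected graph with vertex set $G$, two distinct vertices $x,y$ being adjacent iff $\langle x\rangle\subseteq\langle y\rangle$ or $\langle y\rangle\subseteq\langle x\rangle$; $\kappa(G)$ is the number of spanning trees of $\mathcal{P}(G)$. $\pi(G)$ is the set of prime divisors of $|G|$. $\pi_e(G)$ is the set of orders of elements of $G$, and $\mu(G)$ is the set of elements of $\pi_e(G)$ that are maximal with respect to divisibility. *)

theory Defs
  imports "HOL-Algebra.Algebra" "HOL-Computational_Algebra.Primes"
begin

definition graph_edges :: "'a set \<Rightarrow> ('a \<Rightarrow> 'a \<Rightarrow> bool) \<Rightarrow> 'a set set" where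
  "graph_edges V adj = {{x, y} | x y. x \<in> V \<and> y \<in> V \<and> x \<noteq> y \<and> adj x y}"

definition edge_rel :: "'a set set \<Rightarrow> 'a \<Rightarrow> 'a \<Rightarrow> bool" where
  "edge_rel E x y \<longleftrightarrow> x \<noteq> y \<and> {x, y} \<in> E"

definition graph_connected :: "'a set \<Rightarrow> 'a set set \<Rightarrow> bool" where
  "graph_connected V E \<longleftrightarrow> (\<forall>x\<in>V. \<forall>y\<in>V. (edge_rel E)\<^sup>*\<^sup>* x y)"

definition is_cycle :: "'a set set \<Rightarrow> 'a list \<Rightarrow> bool" where
  "is_cycle E vs \<longleftrightarrow> length vs \<ge> 3 \<and> distinct vs
     \<and> (\<forall>i < length vs - 1. edge_rel E (vs ! i) (vs ! Suc i))
     \<and> edge_rel E (last vs) (hd vs)"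

definition acyclic_graph :: "'a set set \<Rightarrow> bool" where
  "acyclic_graph E \<longleftrightarrow> (\<nexists>vs. is_cycle E vs)"

definition spanning_tree :: "'a set \<Rightarrow> 'a set set \<Rightarrow> 'a set set \<Rightarrow> bool" where
  "spanning_tree V E T \<longleftrightarrow> T \<subseteq> E \<and> graph_connected V T \<and> acyclic_graph T"

definition num_spanning_trees :: "'a set \<Rightarrow> 'a set set \<Rightarrow> nat" where
  "num_spanning_trees V E = card {T. spanning_tree V E T}"

definition power_adj :: "('a, 'b) monoid_scheme \<Rightarrow> 'a \<Rightarrow> 'a \<Rightarrow> bool" where
  "power_adj G x y \<longleftrightarrow> generate G {x} \<subseteq> generate G {y} \<or> generate G {y} \<subseteq> generate G {x}"

definition power_graph_edges :: "('a, 'b) monoid_scheme \<Rightarrow> 'a set set" where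
  "power_graph_edges G = graph_edges (carrier G) (power_adj G)"

definition kappa :: "('a, 'b) monoid_scheme \<Rightarrow> nat" where
  "kappa G = num_spanning_trees (carrier G) (power_graph_edges G)"

definition prime_divs :: "('a, 'b) monoid_scheme \<Rightarrow> nat set" where
  "prime_divs G = {p. Factorial_Ring.prime p \<and> p dvd order G}"

definition elem_orders :: "('a, 'b) monoid_scheme \<Rightarrow> nat set" where
  "elem_orders G = group.ord G ` carrier G"

definition max_elem_orders :: "('a, 'b) monoid_scheme \<Rightarrow> nat set" where
  "max_elem_orders G = {m \<in> elem_orders G. \<forall>k \<in> elem_orders G. m dvd k \<longrightarrow> k = m}"

end

theory Submission
  imports Defs "HOL-Library.Transitive_Closure_Table"
begin

text \<open>Root the spanning trees at the identity. A spanning tree is then the same as a parent map: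
  every other vertex points to a neighbour, and following the pointers always ends at the root.
  Let \<open>H\<close> be the subgroup generated by an element of order \<open>p\<close>. Since \<open>p\<close> is maximal among the
  element orders, every non-identity element of \<open>H\<close> is adjacent exactly to the other elements
  of \<open>H\<close>. A parent map therefore splits independently into its restriction to \<open>H - {1}\<close>, which
  is an arbitrary spanning tree of the complete graph on \<open>H\<close> rooted at \<open>1\<close>, and its restriction
  to the vertices outside \<open>H\<close>; by Cayley's formula there are \<open>p ^ (p - 2)\<close> choices for the first.
  Cayley's formula is proved in the more general form that the maps on a nonempty \<open>S\<close> whose iterates
  eventually leave \<open>S\<close> into a disjoint set \<open>R\<close> number \<open>\<bar>R\<bar> (\<bar>S\<bar> + \<bar>R\<bar>) ^ (\<bar>S\<bar> - 1)\<close>: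
  grouping them by the set \<open>D\<close> of vertices sent directly into \<open>R\<close> yields a recursion in which
  \<open>S\<close> shrinks to \<open>S - D\<close> and \<open>D\<close> takes the role of \<open>R\<close>.\<close>

section \<open>Spanning trees as parent maps\<close>

definition edges_within :: "'a set \<Rightarrow> 'a set set \<Rightarrow> bool" where
  "edges_within V E \<longleftrightarrow> (\<forall>e\<in>E. \<exists>x y. x \<in> V \<and> y \<in> V \<and> x \<noteq> y \<and> e = {x, y})"

lemma edge_rel_commute: "edge_rel E x y \<longleftrightarrow> edge_rel E y x"
  by (auto simp: edge_rel_def insert_commute)

lemma rtranclp_edge_rel_sym: "(edge_rel E)\<^sup>*\<^sup>* x y \<Longrightarrow> (edge_rel E)\<^sup>*\<^sup>* y x"
  by (rule sympD[OF symp_rtranclp]) (auto intro: sympI simp: edge_rel_commute)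

lemma edge_rel_mono: "T \<subseteq> E \<Longrightarrow> edge_rel T x y \<Longrightarrow> edge_rel E x y"
  by (auto simp: edge_rel_def)

lemma edges_within_subset: "edges_within V E \<Longrightarrow> T \<subseteq> E \<Longrightarrow> edges_within V T"
  by (auto simp: edges_within_def)

lemma edge_rel_in_vertices: "edges_within V E \<Longrightarrow> edge_rel E x y \<Longrightarrow> x \<in> V \<and> y \<in> V"
  unfolding edges_within_def edge_rel_def by (auto simp: doubleton_eq_iff)

lemma is_cycle_two_neighbours:
  assumes "is_cycle T vs" and "v \<in> set vs"
  obtains a b where "a \<in> set vs" "b \<in> set vs" "a \<noteq> b" "edge_rel T v a" "edge_rel T v b"
proof -
  define L where "L = length vs"
  have L3: "L \<ge> 3" and dist: "distinct vs"
    and chain: "\<forall>i < L - 1. edge_rel T (vs ! i) (vs ! Suc i)"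
    and close: "edge_rel T (last vs) (hd vs)"
    using assms(1) by (auto simp: is_cycle_def L_def)
  have "vs \<noteq> []" using L3 by (auto simp: L_def)
  then have last_hd: "last vs = vs ! (L - 1)" "hd vs = vs ! 0"
    by (simp_all add: L_def last_conv_nth hd_conv_nth)
  obtain i where i: "i < L" "vs ! i = v"
    using assms(2) by (auto simp: in_set_conv_nth L_def)
  define nxt where "nxt = (if i = L - 1 then 0 else Suc i)"
  define prv where "prv = (if i = 0 then L - 1 else i - 1)"
  have "edge_rel T v (vs ! nxt)"
    using chain close i by (auto simp: nxt_def last_hd)
  moreover have "edge_rel T v (vs ! prv)"
  proof (cases "i = 0")
    case True
    then show ?thesis using close i by (simp add: prv_def last_hd edge_rel_commute)
  next
    case False
    then have "i - 1 < L - 1" using i by simp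
    then have "edge_rel T (vs ! (i - 1)) (vs ! Suc (i - 1))" using chain by blast
    then show ?thesis using False i by (simp add: prv_def edge_rel_commute)
  qed
  moreover have "nxt < L" "prv < L" "nxt \<noteq> prv"
    using L3 i by (auto simp: nxt_def prv_def)
  then have "vs ! nxt \<in> set vs" "vs ! prv \<in> set vs" "vs ! nxt \<noteq> vs ! prv"
    using dist by (simp_all add: L_def nth_eq_iff_index_eq)
  ultimately show thesis using that by blast
qed

lemma rtrancl_path_successively:
  "rtrancl_path r x xs y \<Longrightarrow> successively r (x # xs) \<and> last (x # xs) = y"
  by (induction rule: rtrancl_path.induct) (auto simp: successively_Cons)

lemma is_cycle_of_path:
  assumes e: "edge_rel T a b" and p: "(edge_rel (T - {{a, b}}))\<^sup>*\<^sup>* a b"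
  obtains vs where "is_cycle T vs"
proof -
  let ?R = "edge_rel (T - {{a, b}})"
  obtain xs where "rtrancl_path ?R a xs b"
    using p by (auto simp: rtranclp_eq_rtrancl_path)
  then obtain ys where path: "rtrancl_path ?R a ys b" and dist: "distinct (a # ys)"
    by (rule rtrancl_path_distinct)
  have chain: "successively ?R (a # ys)" and last: "last (a # ys) = b"
    using rtrancl_path_successively[OF path] by auto
  have "a \<noteq> b" using e by (simp add: edge_rel_def)
  then obtain y ys' where ys: "ys = y # ys'" using last by (cases ys) auto
  have "ys' \<noteq> []"
  proof
    assume "ys' = []"
    then have "?R a b" using chain last ys by simp
    then show False by (simp add: edge_rel_def)
  qed
  then have "length (a # ys) \<ge> 3" using ys by (cases ys') auto
  moreover have "edge_rel T ((a # ys) ! i) ((a # ys) ! Suc i)" if "i < length (a # ys) - 1" for i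
  proof -
    have "?R ((a # ys) ! i) ((a # ys) ! Suc i)"
      by (rule successively_nth[OF chain]) (use that in simp)
    then show ?thesis by (rule edge_rel_mono[rotated]) blast
  qed
  moreover have "edge_rel T (last (a # ys)) (hd (a # ys))"
    using last e by (simp add: edge_rel_commute)
  ultimately have "is_cycle T (a # ys)" using dist unfolding is_cycle_def by blast
  then show thesis by (rule that)
qed

lemma connected_subgraph_of_acyclic_eq:
  assumes acyc: "acyclic_graph T" and conn: "graph_connected V T'"
    and sub: "T' \<subseteq> T" and T: "edges_within V T"
  shows "T' = T"
proof (rule ccontr)
  assume "T' \<noteq> T"
  then obtain e where "e \<in> T" "e \<notin> T'" using sub by blast
  then obtain a b where ab: "a \<in> V" "b \<in> V" "a \<noteq> b" "e = {a, b}" "e \<in> T" "e \<notin> T'"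
    using T by (auto simp: edges_within_def)
  have "(edge_rel T')\<^sup>*\<^sup>* a b" using conn ab by (auto simp: graph_connected_def)
  moreover have "edge_rel (T - {{a, b}}) x y" if "edge_rel T' x y" for x y
    using that sub ab by (auto simp: edge_rel_def)
  ultimately have path: "(edge_rel (T - {{a, b}}))\<^sup>*\<^sup>* a b" by (metis mono_rtranclp)
  have "edge_rel T a b" using ab by (simp add: edge_rel_def)
  then obtain vs where "is_cycle T vs" using path by (rule is_cycle_of_path)
  with acyc show False unfolding acyclic_graph_def by blast
qed

definition parent_step :: "('a \<Rightarrow> 'a) \<Rightarrow> 'a set \<Rightarrow> 'a \<Rightarrow> 'a \<Rightarrow> bool" where
  "parent_step f W x y \<longleftrightarrow> x \<in> W \<and> y = f x"

lemma parent_step_rtranclp_closed: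
  assumes "(parent_step f W)\<^sup>*\<^sup>* v y" "v \<in> C" "\<And>x. x \<in> C \<Longrightarrow> x \<in> W \<Longrightarrow> f x \<in> C"
  shows "y \<in> C"
  using assms by (induction rule: rtranclp_induct) (auto simp: parent_step_def)

lemma parent_step_rtranclp_parent:
  assumes "v \<in> W" "c \<notin> W" "(parent_step f W)\<^sup>*\<^sup>* v c"
  shows "(parent_step f W)\<^sup>*\<^sup>* (f v) c"
  using assms(3)
proof (cases rule: converse_rtranclpE)
  case base
  then show ?thesis using assms by auto
next
  case (step w)
  then show ?thesis by (auto simp: parent_step_def)
qed

lemma rtranclp_parent_step_outside:
  assumes path: "(parent_step f W)\<^sup>*\<^sup>* y c" and "y \<notin> A"
    and closed: "\<And>v. v \<in> W \<Longrightarrow> v \<notin> A \<Longrightarrow> f v \<notin> A"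
    and agree: "\<And>v. v \<notin> A \<Longrightarrow> f' v = f v"
  shows "(parent_step f' W)\<^sup>*\<^sup>* y c"
proof -
  have "y \<notin> A \<longrightarrow> (parent_step f' W)\<^sup>*\<^sup>* y c"
    using path
  proof (induction rule: converse_rtranclp_induct)
    case (step y z)
    then show ?case
      using closed agree by (auto simp: parent_step_def intro: converse_rtranclp_into_rtranclp)
  qed simp
  then show ?thesis using \<open>y \<notin> A\<close> by blast
qed

definition dist_to :: "('a \<Rightarrow> 'a \<Rightarrow> bool) \<Rightarrow> 'a \<Rightarrow> 'a \<Rightarrow> nat" where
  "dist_to R c v = (LEAST n. (R ^^ n) v c)"

lemma relpowp_dist_to: "R\<^sup>*\<^sup>* v c \<Longrightarrow> (R ^^ dist_to R c v) v c"
  unfolding dist_to_def rtranclp_power by (rule LeastI_ex)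

lemma dist_to_le: "(R ^^ n) v c \<Longrightarrow> dist_to R c v \<le> n"
  unfolding dist_to_def by (rule Least_le)

lemma dist_to_step:
  assumes "R\<^sup>*\<^sup>* v c" "v \<noteq> c"
  obtains w where "R v w" "Suc (dist_to R c w) \<le> dist_to R c v"
proof -
  have path: "(R ^^ dist_to R c v) v c" by (rule relpowp_dist_to[OF assms(1)])
  have "dist_to R c v \<noteq> 0"
  proof
    assume "dist_to R c v = 0"
    with path assms(2) show False by simp
  qed
  then obtain n where n: "dist_to R c v = Suc n" using not0_implies_Suc by blast
  with path obtain w where "R v w" "(R ^^ n) w c" by (metis relpowp_Suc_D2)
  moreover have "dist_to R c w \<le> n" using \<open>(R ^^ n) w c\<close> by (rule dist_to_le)
  ultimately show thesis using that n by simp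
qed

lemma dist_to_parent:
  assumes "v \<in> W" "c \<notin> W" "(parent_step f W)\<^sup>*\<^sup>* v c"
  shows "dist_to (parent_step f W) c v = Suc (dist_to (parent_step f W) c (f v))"
proof -
  let ?R = "parent_step f W"
  have step: "?R v (f v)" using assms(1) by (simp add: parent_step_def)
  have "v \<noteq> c" using assms(1,2) by blast
  with assms(3) obtain w where "?R v w" "Suc (dist_to ?R c w) \<le> dist_to ?R c v"
    by (rule dist_to_step)
  then have "Suc (dist_to ?R c (f v)) \<le> dist_to ?R c v" by (simp add: parent_step_def)
  moreover have "(?R ^^ Suc (dist_to ?R c (f v))) v c"
    using step relpowp_dist_to[OF parent_step_rtranclp_parent[OF assms]] by (rule relpowp_Suc_I2)
  then have "dist_to ?R c v \<le> Suc (dist_to ?R c (f v))" by (rule dist_to_le)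
  ultimately show ?thesis by simp
qed

definition parent_edges :: "('a \<Rightarrow> 'a) \<Rightarrow> 'a set \<Rightarrow> 'a set set" where
  "parent_edges f W = (\<lambda>v. {v, f v}) ` W"

lemma edge_rel_parent_edgesD:
  "edge_rel (parent_edges f W) a b \<Longrightarrow> (a \<in> W \<and> f a = b) \<or> (b \<in> W \<and> f b = a)"
  unfolding edge_rel_def parent_edges_def by (auto simp: doubleton_eq_iff)

lemma acyclic_parent_edges:
  assumes "c \<notin> W" and reach: "\<And>v. v \<in> W \<Longrightarrow> (parent_step f W)\<^sup>*\<^sup>* v c"
  shows "acyclic_graph (parent_edges f W)"
  unfolding acyclic_graph_def
proof
  assume "\<exists>vs. is_cycle (parent_edges f W) vs"
  then obtain vs where cyc: "is_cycle (parent_edges f W) vs" ..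
  let ?d = "dist_to (parent_step f W) c"
  have "set vs \<noteq> {}" using cyc by (auto simp: is_cycle_def)
  then have "Max (?d ` set vs) \<in> ?d ` set vs" by simp
  then obtain v where v: "v \<in> set vs" "?d v = Max (?d ` set vs)" by auto
  \<comment> \<open>A cycle vertex farthest from the root cannot be the parent of a neighbour on the cycle.\<close>
  have parent: "f v = u" if "u \<in> set vs" "edge_rel (parent_edges f W) v u" for u
    using edge_rel_parent_edgesD[OF that(2)]
  proof
    assume u: "u \<in> W \<and> f u = v"
    then have "?d u = Suc (?d v)" using dist_to_parent[OF _ assms(1) reach] by auto
    moreover have "?d u \<le> ?d v" using that(1) v(2) by simp
    ultimately show ?thesis by simp
  qed simp
  obtain a b where "a \<in> set vs" "b \<in> set vs" "a \<noteq> b"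
    "edge_rel (parent_edges f W) v a" "edge_rel (parent_edges f W) v b"
    using cyc v(1) by (rule is_cycle_two_neighbours)
  with parent show False by metis
qed

definition parent_maps :: "'a set \<Rightarrow> 'a set set \<Rightarrow> 'a \<Rightarrow> ('a \<Rightarrow> 'a) set" where
  "parent_maps V E c = {f. f \<in> extensional (V - {c}) \<and> (\<forall>v\<in>V - {c}. edge_rel E v (f v))
      \<and> (\<forall>v\<in>V. (parent_step f (V - {c}))\<^sup>*\<^sup>* v c)}"

lemma spanning_tree_parent_edges:
  assumes f: "f \<in> parent_maps V E c"
  shows "spanning_tree V E (parent_edges f (V - {c}))"
proof -
  let ?W = "V - {c}" and ?T = "parent_edges f (V - {c})"
  have fE: "\<And>v. v \<in> ?W \<Longrightarrow> edge_rel E v (f v)"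
    and reach: "\<And>v. v \<in> V \<Longrightarrow> (parent_step f ?W)\<^sup>*\<^sup>* v c"
    using f by (auto simp: parent_maps_def)
  have "?T \<subseteq> E" using fE by (auto simp: parent_edges_def edge_rel_def)
  moreover have "(edge_rel ?T)\<^sup>*\<^sup>* v c" if "v \<in> V" for v
  proof -
    have "parent_step f ?W x y \<longrightarrow> edge_rel ?T x y" for x y
      using fE by (auto simp: parent_step_def parent_edges_def edge_rel_def)
    then show ?thesis using reach[OF that] by (metis mono_rtranclp)
  qed
  then have "graph_connected V ?T"
    unfolding graph_connected_def by (metis rtranclp_edge_rel_sym rtranclp_trans)
  moreover have "acyclic_graph ?T" by (rule acyclic_parent_edges) (use reach in auto)
  ultimately show ?thesis by (simp add: spanning_tree_def)
qed

lemma inj_on_parent_edges: "inj_on (\<lambda>f. parent_edges f (V - {c})) (parent_maps V E c)"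
proof (rule inj_onI)
  let ?W = "V - {c}"
  fix f g assume f: "f \<in> parent_maps V E c" and g: "g \<in> parent_maps V E c"
    and eq: "parent_edges f ?W = parent_edges g ?W"
  have reach: "\<And>v. v \<in> V \<Longrightarrow> (parent_step g ?W)\<^sup>*\<^sup>* v c"
    and ext: "f \<in> extensional ?W" "g \<in> extensional ?W"
    using f g by (auto simp: parent_maps_def)
  define D where "D = {v \<in> ?W. f v \<noteq> g v}"
  \<comment> \<open>The edge \<open>{v, g v}\<close> of the common tree must be \<open>{g v, f (g v)}\<close>, so the
      disagreement set is closed under \<open>g\<close> and can never reach the root.\<close>
  have closed: "g v \<in> D" if "v \<in> D" for v
  proof -
    have vW: "v \<in> ?W" and ne: "f v \<noteq> g v" using that by (auto simp: D_def)
    have "{v, g v} \<in> parent_edges f ?W" using eq vW by (auto simp: parent_edges_def)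
    then obtain x where "x \<in> ?W" "{v, g v} = {x, f x}" by (auto simp: parent_edges_def)
    then have gvW: "g v \<in> ?W" and fgv: "f (g v) = v" using ne by (auto simp: doubleton_eq_iff)
    have "g (g v) \<noteq> v"
    proof
      assume "g (g v) = v"
      then have "c \<in> {v, g v}"
        using parent_step_rtranclp_closed[OF reach[of v], of "{v, g v}"] vW by auto
      then show False using vW gvW by auto
    qed
    then show ?thesis using gvW fgv by (auto simp: D_def)
  qed
  have "D = {}"
  proof (rule ccontr)
    assume "D \<noteq> {}"
    then obtain v where "v \<in> D" by auto
    then have "c \<in> D"
      using parent_step_rtranclp_closed[OF reach[of v], of D] closed by (auto simp: D_def)
    then show False by (auto simp: D_def)
  qed
  show "f = g"
  proof
    fix x show "f x = g x"
      using \<open>D = {}\<close> ext by (cases "x \<in> ?W") (auto simp: D_def extensional_def)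
  qed
qed

lemma spanning_tree_parent_map:
  assumes T: "spanning_tree V E T" and c: "c \<in> V" and E: "edges_within V E"
  obtains f where "f \<in> parent_maps V E c" "parent_edges f (V - {c}) \<subseteq> T"
proof -
  let ?W = "V - {c}" and ?R = "edge_rel T"
  let ?d = "dist_to ?R c"
  have TE: "T \<subseteq> E" and conn: "graph_connected V T" using T by (auto simp: spanning_tree_def)
  have reachT: "?R\<^sup>*\<^sup>* v c" if "v \<in> V" for v
    using conn that c by (auto simp: graph_connected_def)
  have closer: "\<exists>w. ?R v w \<and> ?d w < ?d v" if "v \<in> ?W" for v
  proof -
    have "?R\<^sup>*\<^sup>* v c" "v \<noteq> c" using reachT that by auto
    then obtain w where "?R v w" "Suc (?d w) \<le> ?d v" by (rule dist_to_step)
    then show ?thesis by auto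
  qed
  define f where "f v = (if v \<in> ?W then SOME w. ?R v w \<and> ?d w < ?d v else undefined)" for v
  have f: "?R v (f v)" "?d (f v) < ?d v" if "v \<in> ?W" for v
    using someI_ex[OF closer[OF that]] that by (auto simp: f_def)
  have fV: "f v \<in> V" if "v \<in> ?W" for v
    using f(1)[OF that] edge_rel_in_vertices[OF edges_within_subset[OF E TE]] by blast
  have reach: "(parent_step f ?W)\<^sup>*\<^sup>* v c" if "v \<in> V" for v
    using that
  proof (induction "?d v" arbitrary: v rule: less_induct)
    case less
    show ?case
    proof (cases "v = c")
      case False
      then have vW: "v \<in> ?W" using less.prems by simp
      then have "(parent_step f ?W)\<^sup>*\<^sup>* (f v) c" using less.hyps f(2) fV by blast
      moreover have "parent_step f ?W v (f v)" using vW by (simp add: parent_step_def)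
      ultimately show ?thesis by (rule converse_rtranclp_into_rtranclp[rotated])
    qed simp
  qed
  have "f \<in> extensional ?W" by (simp add: f_def extensional_def)
  then have "f \<in> parent_maps V E c"
    using f(1) reach edge_rel_mono[OF TE] by (auto simp: parent_maps_def)
  moreover have "parent_edges f ?W \<subseteq> T" using f(1) by (auto simp: parent_edges_def edge_rel_def)
  ultimately show thesis by (rule that)
qed

lemma num_spanning_trees_eq_card_parent_maps:
  assumes c: "c \<in> V" and E: "edges_within V E"
  shows "num_spanning_trees V E = card (parent_maps V E c)"
proof -
  have "(\<lambda>f. parent_edges f (V - {c})) ` parent_maps V E c = {T. spanning_tree V E T}"
  proof (intro equalityI subsetI)
    fix T assume "T \<in> {T. spanning_tree V E T}"
    then have T: "spanning_tree V E T" by simp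
    then obtain f where f: "f \<in> parent_maps V E c" and sub: "parent_edges f (V - {c}) \<subseteq> T"
      using c E by (rule spanning_tree_parent_map)
    have "parent_edges f (V - {c}) = T"
    proof (rule connected_subgraph_of_acyclic_eq[OF _ _ sub])
      show "acyclic_graph T" using T by (simp add: spanning_tree_def)
      show "graph_connected V (parent_edges f (V - {c}))"
        using spanning_tree_parent_edges[OF f] by (simp add: spanning_tree_def)
      show "edges_within V T" using T E by (auto simp: spanning_tree_def intro: edges_within_subset)
    qed
    then show "T \<in> (\<lambda>f. parent_edges f (V - {c})) ` parent_maps V E c" using f by blast
  qed (auto intro: spanning_tree_parent_edges)
  with inj_on_parent_edges
  have "bij_betw (\<lambda>f. parent_edges f (V - {c})) (parent_maps V E c) {T. spanning_tree V E T}"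
    by (rule bij_betw_imageI)
  then show ?thesis unfolding num_spanning_trees_def by (simp add: bij_betw_same_card)
qed

section \<open>Rooted forests and Cayley's formula\<close>

lemma sum_Pow_card:
  assumes "finite S"
  shows "(\<Sum>D\<in>Pow S. h (card D)) = (\<Sum>d\<le>card S. (card S choose d) * h d)"
proof -
  have "(\<Sum>D\<in>Pow S. h (card D)) = (\<Sum>d\<le>card S. \<Sum>D\<in>{D \<in> Pow S. card D = d}. h (card D))"
    by (rule sum.group[symmetric]) (use assms in \<open>auto intro: card_mono\<close>)
  also have "\<dots> = (\<Sum>d\<le>card S. (card S choose d) * h d)"
    using assms by (simp add: n_subsets)
  finally show ?thesis .
qed

lemma sum_mult_binomial_ring:
  fixes a b :: "'a :: comm_semiring_1"
  shows "(\<Sum>d\<le>m. of_nat (d * (m choose d)) * a ^ d * b ^ (m - d)) = of_nat m * a * (a + b) ^ (m - 1)"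
proof (cases m)
  case (Suc n)
  have "(\<Sum>d\<le>m. of_nat (d * (m choose d)) * a ^ d * b ^ (m - d))
      = (\<Sum>j\<le>n. of_nat (Suc j * (Suc n choose Suc j)) * a ^ Suc j * b ^ (n - j))"
    unfolding Suc sum.atMost_Suc_shift by (simp del: of_nat_mult binomial_Suc_Suc)
  also have "\<dots> = (\<Sum>j\<le>n. of_nat m * a * (of_nat (n choose j) * a ^ j * b ^ (n - j)))"
  proof (rule sum.cong[OF refl])
    fix j
    have "Suc j * (Suc n choose Suc j) = m * (n choose j)"
      by (metis Suc Suc_times_binomial_eq mult.commute)
    then show "of_nat (Suc j * (Suc n choose Suc j)) * a ^ Suc j * b ^ (n - j)
        = of_nat m * a * (of_nat (n choose j) * a ^ j * b ^ (n - j))"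
      by (simp add: mult_ac del: binomial_Suc_Suc)
  qed
  also have "\<dots> = of_nat m * a * (a + b) ^ (m - 1)"
    by (simp add: Suc binomial_ring sum_distrib_left)
  finally show ?thesis .
qed simp

text \<open>Parent maps of the rooted forests on \<open>S\<close> whose roots hang from vertices of \<open>R\<close>.\<close>
definition forest_maps :: "'a set \<Rightarrow> 'a set \<Rightarrow> ('a \<Rightarrow> 'a) set" where
  "forest_maps S R = {g \<in> S \<rightarrow>\<^sub>E S \<union> R. \<forall>v\<in>S. \<exists>r\<in>R. (parent_step g S)\<^sup>*\<^sup>* v r}"

definition forest_maps_attached :: "'a set \<Rightarrow> 'a set \<Rightarrow> 'a set \<Rightarrow> ('a \<Rightarrow> 'a) set" where
  "forest_maps_attached S R D = {g \<in> forest_maps S R. {v \<in> S. g v \<in> R} = D}"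

lemma finite_forest_maps: "finite S \<Longrightarrow> finite R \<Longrightarrow> finite (forest_maps S R)"
  by (rule finite_subset[of _ "S \<rightarrow>\<^sub>E S \<union> R"]) (auto simp: forest_maps_def finite_PiE)

lemma forest_maps_empty: "forest_maps {} R = {\<lambda>_. undefined}"
  by (auto simp: forest_maps_def)

lemma parent_step_restrict: "parent_step (restrict g A) A = parent_step g A"
  by (auto simp: parent_step_def fun_eq_iff)

lemma forest_map_reaches_attached:
  assumes g: "g \<in> forest_maps S R" and disj: "S \<inter> R = {}" and v: "v \<in> S"
  defines "D \<equiv> {x \<in> S. g x \<in> R}"
  shows "\<exists>d\<in>D. (parent_step g (S - D))\<^sup>*\<^sup>* v d"
proof -
  obtain r where r: "r \<in> R" "(parent_step g S)\<^sup>*\<^sup>* v r" using g v by (auto simp: forest_maps_def)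
  have gS: "\<And>x. x \<in> S \<Longrightarrow> g x \<in> S \<union> R" using g by (auto simp: forest_maps_def)
  have "y \<in> S \<longrightarrow> (\<exists>d\<in>D. (parent_step g (S - D))\<^sup>*\<^sup>* y d)" if "(parent_step g S)\<^sup>*\<^sup>* y r" for y
    using that
  proof (induction rule: converse_rtranclp_induct)
    case base
    then show ?case using r(1) disj by blast
  next
    case (step y z)
    then have y: "y \<in> S" "z = g y" by (auto simp: parent_step_def)
    show ?case
    proof (cases "y \<in> D")
      case False
      then have "z \<in> S" "parent_step g (S - D) y z" using gS y by (auto simp: D_def parent_step_def)
      then show ?thesis using step.IH by (meson converse_rtranclp_into_rtranclp)
    qed blast
  qed
  then show ?thesis using r(2) v by blast
qed

lemma restrict_forest_map_attached:
  assumes g: "g \<in> forest_maps S R" and disj: "S \<inter> R = {}"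
  defines "D \<equiv> {x \<in> S. g x \<in> R}"
  shows "restrict g (S - D) \<in> forest_maps (S - D) D"
proof -
  have "restrict g (S - D) \<in> S - D \<rightarrow>\<^sub>E (S - D) \<union> D"
    using g by (auto simp: forest_maps_def D_def)
  moreover have "\<forall>v\<in>S - D. \<exists>d\<in>D. (parent_step (restrict g (S - D)) (S - D))\<^sup>*\<^sup>* v d"
    using forest_map_reaches_attached[OF g disj] by (simp add: parent_step_restrict D_def)
  ultimately show ?thesis by (simp add: forest_maps_def)
qed

lemma glue_forest_maps_attached:
  assumes disj: "S \<inter> R = {}" and DS: "D \<subseteq> S"
    and g1: "g1 \<in> D \<rightarrow>\<^sub>E R" and g2: "g2 \<in> forest_maps (S - D) D"
  shows "(\<lambda>v. if v \<in> D then g1 v else g2 v) \<in> forest_maps_attached S R D"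
proof -
  define g where "g = (\<lambda>v. if v \<in> D then g1 v else g2 v)"
  have g2_Pi: "g2 \<in> S - D \<rightarrow>\<^sub>E (S - D) \<union> D"
    and g2_reach: "\<forall>v\<in>S - D. \<exists>d\<in>D. (parent_step g2 (S - D))\<^sup>*\<^sup>* v d"
    using g2 by (auto simp: forest_maps_def)
  have "g \<in> S \<rightarrow>\<^sub>E S \<union> R" using g1 g2_Pi DS by (auto simp: g_def PiE_iff extensional_def)
  moreover have "\<exists>r\<in>R. (parent_step g S)\<^sup>*\<^sup>* v r" if v: "v \<in> S" for v
  proof -
    have last_step: "parent_step g S d (g1 d)" "g1 d \<in> R" if "d \<in> D" for d
      using that g1 DS by (auto simp: parent_step_def g_def)
    have "\<exists>d\<in>D. (parent_step g S)\<^sup>*\<^sup>* v d"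
    proof (cases "v \<in> D")
      case False
      then obtain d where "d \<in> D" "(parent_step g2 (S - D))\<^sup>*\<^sup>* v d" using g2_reach v by blast
      moreover have "parent_step g2 (S - D) x y \<longrightarrow> parent_step g S x y" for x y
        by (auto simp: parent_step_def g_def)
      ultimately show ?thesis by (metis mono_rtranclp)
    qed auto
    then show ?thesis using last_step by (meson rtranclp.rtrancl_into_rtrancl)
  qed
  moreover have "{v \<in> S. g v \<in> R} = D"
  proof -
    have "v \<in> D" if "v \<in> S" "g v \<in> R" for v
    proof (rule ccontr)
      assume "v \<notin> D"
      then have "g v \<in> S" using g2_Pi that(1) DS by (auto simp: g_def)
      then show False using that(2) disj by blast
    qed
    moreover have "g v \<in> R" if "v \<in> D" for v using that g1 by (auto simp: g_def)
    ultimately show ?thesis using DS by blast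
  qed
  ultimately have "g \<in> forest_maps_attached S R D"
    by (simp add: forest_maps_attached_def forest_maps_def)
  then show ?thesis by (simp only: g_def)
qed

lemma card_forest_maps_attached:
  assumes fin: "finite S" "finite R" and disj: "S \<inter> R = {}" and DS: "D \<subseteq> S"
  shows "card (forest_maps_attached S R D) = card R ^ card D * card (forest_maps (S - D) D)"
proof -
  let ?A = "forest_maps_attached S R D" and ?B = "(D \<rightarrow>\<^sub>E R) \<times> forest_maps (S - D) D"
  let ?split = "\<lambda>g. (restrict g D, restrict g (S - D))"
  let ?glue = "\<lambda>(g1, g2). (\<lambda>v. if v \<in> D then g1 v else g2 v)"
  have "bij_betw ?split ?A ?B"
  proof (rule bij_betw_byWitness[where f' = ?glue])
    show "\<forall>g\<in>?A. ?glue (?split g) = g"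
      using DS by (auto simp: forest_maps_attached_def forest_maps_def PiE_iff extensional_def fun_eq_iff)
    show "\<forall>q\<in>?B. ?split (?glue q) = q"
      by (auto simp: forest_maps_def PiE_iff extensional_def fun_eq_iff)
    show "?split ` ?A \<subseteq> ?B"
    proof (rule image_subsetI)
      fix g assume "g \<in> ?A"
      then have D: "D = {x \<in> S. g x \<in> R}" and g: "g \<in> forest_maps S R"
        by (auto simp: forest_maps_attached_def)
      then have "restrict g (S - D) \<in> forest_maps (S - D) D"
        using restrict_forest_map_attached[OF g disj] by simp
      moreover have "restrict g D \<in> D \<rightarrow>\<^sub>E R" using D by auto
      ultimately show "?split g \<in> ?B" by simp
    qed
    show "?glue ` ?B \<subseteq> ?A"
      using glue_forest_maps_attached[OF disj DS] by auto
  qed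
  then have "card ?A = card (D \<rightarrow>\<^sub>E R) * card (forest_maps (S - D) D)"
    by (simp add: bij_betw_same_card card_cartesian_product)
  also have "card (D \<rightarrow>\<^sub>E R) = card R ^ card D"
    using DS fin by (simp add: card_PiE finite_subset)
  finally show ?thesis .
qed

lemma card_forest_maps_eq_sum:
  assumes fin: "finite S" "finite R" and disj: "S \<inter> R = {}" and ne: "S \<noteq> {}"
  shows "card (forest_maps S R) = (\<Sum>D\<in>Pow S - {{}}. card R ^ card D * card (forest_maps (S - D) D))"
proof -
  have "card (forest_maps S R) = card (\<Union>D\<in>Pow S - {{}}. forest_maps_attached S R D)"
  proof (intro arg_cong[where f = card] equalityI subsetI)
    fix g assume g: "g \<in> forest_maps S R"
    obtain v where "v \<in> S" using ne by blast
    then have "{x \<in> S. g x \<in> R} \<noteq> {}" using forest_map_reaches_attached[OF g disj] by blast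
    then show "g \<in> (\<Union>D\<in>Pow S - {{}}. forest_maps_attached S R D)"
      using g by (auto simp: forest_maps_attached_def)
  qed (auto simp: forest_maps_attached_def)
  also have "\<dots> = (\<Sum>D\<in>Pow S - {{}}. card (forest_maps_attached S R D))"
  proof (rule card_UN_disjoint)
    show "finite (Pow S - {{}})" using fin by simp
    show "\<forall>D\<in>Pow S - {{}}. finite (forest_maps_attached S R D)"
      using finite_forest_maps[OF fin] by (auto simp: forest_maps_attached_def)
  qed (auto simp: forest_maps_attached_def)
  also have "\<dots> = (\<Sum>D\<in>Pow S - {{}}. card R ^ card D * card (forest_maps (S - D) D))"
    using card_forest_maps_attached[OF fin disj] by simp
  finally show ?thesis .
qed

text \<open>Multiplied out by \<open>\<bar>S\<bar> + \<bar>R\<bar>\<close> so that the formula also covers \<open>S = {}\<close>.\<close>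
lemma card_forest_maps:
  assumes "finite S" "finite R" "S \<inter> R = {}"
  shows "(card S + card R) * card (forest_maps S R) = card R * (card S + card R) ^ card S"
  using assms
proof (induction "card S" arbitrary: S R rule: less_induct)
  case less
  note fin = less.prems(1,2) and disj = less.prems(3)
  show ?case
  proof (cases "S = {}")
    case True
    then show ?thesis by (simp add: forest_maps_empty)
  next
    case False
    let ?m = "card S" and ?k = "card R"
    let ?h = "\<lambda>d. d * (?m choose d) * ?k ^ d * ?m ^ (?m - d)"
    have m: "?m > 0" using False fin by (simp add: card_gt_0_iff)
    have IH: "?m * card (forest_maps (S - D) D) = card D * ?m ^ (?m - card D)"
      if "D \<in> Pow S - {{}}" for D
    proof -
      have DS: "D \<subseteq> S" and "D \<noteq> {}" using that by auto
      then have "finite D" "card D > 0" using fin finite_subset by (auto simp: card_gt_0_iff)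
      moreover have "card (S - D) + card D = ?m" "card (S - D) = ?m - card D"
        using DS fin by (simp_all add: card_Diff_subset card_mono \<open>finite D\<close>)
      ultimately show ?thesis
        using less.hyps[of "S - D" D] fin by auto
    qed
    have "?m * card (forest_maps S R)
        = (\<Sum>D\<in>Pow S - {{}}. ?k ^ card D * (?m * card (forest_maps (S - D) D)))"
      by (simp add: card_forest_maps_eq_sum[OF fin disj False] sum_distrib_left mult_ac)
    also have "\<dots> = (\<Sum>D\<in>Pow S - {{}}. ?k ^ card D * (card D * ?m ^ (?m - card D)))"
      using IH by simp
    also have "\<dots> = (\<Sum>D\<in>Pow S. ?k ^ card D * (card D * ?m ^ (?m - card D)))"
      using fin by (intro sum.mono_neutral_left) auto
    also have "\<dots> = (\<Sum>d\<le>?m. ?h d)"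
      using sum_Pow_card[OF fin(1), of "\<lambda>d. ?k ^ d * (d * ?m ^ (?m - d))"] by (simp add: mult_ac)
    also have "\<dots> = ?m * ?k * (?k + ?m) ^ (?m - 1)"
      using sum_mult_binomial_ring[of ?m ?k ?m] by simp
    finally have "card (forest_maps S R) = ?k * (?m + ?k) ^ (?m - 1)"
      using m by (simp add: add.commute)
    moreover have "(?m + ?k) ^ ?m = (?m + ?k) * (?m + ?k) ^ (?m - 1)"
      using m by (simp add: power_eq_if)
    ultimately show ?thesis by simp
  qed
qed

section \<open>Splitting off a clique\<close>

lemma restrict_parent_map:
  assumes K: "c \<in> K" "K \<subseteq> V"
    and adj: "\<And>y z. y \<in> K - {c} \<Longrightarrow> edge_rel E y z \<longleftrightarrow> z \<in> K \<and> z \<noteq> y"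
    and f: "f \<in> parent_maps V E c"
  shows "restrict f (K - {c}) \<in> forest_maps (K - {c}) {c}"
proof -
  let ?S = "K - {c}" and ?W = "V - {c}"
  have fE: "\<And>v. v \<in> ?W \<Longrightarrow> edge_rel E v (f v)"
    and reach: "\<And>v. v \<in> V \<Longrightarrow> (parent_step f ?W)\<^sup>*\<^sup>* v c"
    using f by (auto simp: parent_maps_def)
  have fK: "f v \<in> K" if "v \<in> ?S" for v using adj[OF that] fE[of v] that K by auto
  have "y \<in> K \<longrightarrow> (parent_step f ?S)\<^sup>*\<^sup>* y c" if "(parent_step f ?W)\<^sup>*\<^sup>* y c" for y
    using that
  proof (induction rule: converse_rtranclp_induct)
    case (step y z)
    show ?case
    proof
      assume "y \<in> K"
      with step.hyps(1) have yS: "y \<in> ?S" and z: "z = f y" by (auto simp: parent_step_def)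
      then have "(parent_step f ?S)\<^sup>*\<^sup>* z c" using step.IH fK by blast
      moreover have "parent_step f ?S y z" using yS z by (simp add: parent_step_def)
      ultimately show "(parent_step f ?S)\<^sup>*\<^sup>* y c" by (rule converse_rtranclp_into_rtranclp[rotated])
    qed
  qed simp
  then have "\<forall>v\<in>?S. \<exists>r\<in>{c}. (parent_step (restrict f ?S) ?S)\<^sup>*\<^sup>* v r"
    using reach K by (auto simp: parent_step_restrict)
  moreover have "restrict f ?S \<in> ?S \<rightarrow>\<^sub>E ?S \<union> {c}" using fK by auto
  ultimately show ?thesis by (simp add: forest_maps_def)
qed

lemma glue_parent_map:
  assumes K: "c \<in> K" "K \<subseteq> V"
    and adj: "\<And>y z. y \<in> K - {c} \<Longrightarrow> edge_rel E y z \<longleftrightarrow> z \<in> K \<and> z \<noteq> y"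
    and g: "g \<in> forest_maps (K - {c}) {c}" and f: "f \<in> parent_maps V E c"
  shows "(\<lambda>v. if v \<in> K - {c} then g v else f v) \<in> parent_maps V E c"
proof -
  let ?S = "K - {c}" and ?W = "V - {c}"
  define f' where "f' = (\<lambda>v. if v \<in> ?S then g v else f v)"
  have fE: "\<And>v. v \<in> ?W \<Longrightarrow> edge_rel E v (f v)"
    and reach: "\<And>v. v \<in> V \<Longrightarrow> (parent_step f ?W)\<^sup>*\<^sup>* v c"
    and f_ext: "f \<in> extensional ?W"
    using f by (auto simp: parent_maps_def)
  have gK: "g v \<in> K" and g_reach: "(parent_step g ?S)\<^sup>*\<^sup>* v c" if "v \<in> ?S" for v
    using g that K by (auto simp: forest_maps_def)
  have g_ne: "g v \<noteq> v" if "v \<in> ?S" for v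
  proof
    assume "g v = v"
    then have "c \<in> {v}" using parent_step_rtranclp_closed[OF g_reach[OF that], of "{v}"] by auto
    then show False using that by simp
  qed
  have "f' \<in> extensional ?W"
    using f_ext g K by (auto simp: f'_def extensional_def forest_maps_def PiE_iff)
  moreover have "edge_rel E v (f' v)" if "v \<in> ?W" for v
    using adj gK g_ne fE that by (auto simp: f'_def)
  moreover have "(parent_step f' ?W)\<^sup>*\<^sup>* v c" if v: "v \<in> V" for v
  proof (cases "v \<in> ?S")
    case True
    have "parent_step g ?S x y \<longrightarrow> parent_step f' ?W x y" for x y
      using K by (auto simp: parent_step_def f'_def)
    then show ?thesis using g_reach[OF True] by (metis mono_rtranclp)
  next
    case False
    have "f u \<notin> ?S" if "u \<in> ?W" "u \<notin> ?S" for u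
    proof
      assume "f u \<in> ?S"
      moreover have "edge_rel E (f u) u" using fE[OF that(1)] by (simp add: edge_rel_commute)
      ultimately have "u \<in> K" using adj by blast
      with that show False by blast
    qed
    moreover have "f' u = f u" if "u \<notin> ?S" for u using that by (auto simp: f'_def)
    ultimately show ?thesis by (rule rtranclp_parent_step_outside[OF reach[OF v] False])
  qed
  ultimately have "f' \<in> parent_maps V E c" by (simp add: parent_maps_def)
  then show ?thesis by (simp only: f'_def)
qed

lemma card_parent_maps_eq_mult:
  assumes K: "c \<in> K" "K \<subseteq> V"
    and adj: "\<And>y z. y \<in> K - {c} \<Longrightarrow> edge_rel E y z \<longleftrightarrow> z \<in> K \<and> z \<noteq> y"
  shows "card (parent_maps V E c)
    = card (forest_maps (K - {c}) {c}) * card ((\<lambda>f. restrict f (V - K)) ` parent_maps V E c)"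
proof -
  let ?S = "K - {c}" and ?P = "parent_maps V E c"
  let ?B = "(\<lambda>f. restrict f (V - K)) ` ?P"
  let ?split = "\<lambda>f. (restrict f ?S, restrict f (V - K))"
  let ?glue = "\<lambda>(g, h). (\<lambda>v. if v \<in> ?S then g v else h v)"
  have ext: "f \<in> extensional (V - {c})" if "f \<in> ?P" for f
    using that by (simp add: parent_maps_def)
  have "bij_betw ?split ?P (forest_maps ?S {c} \<times> ?B)"
  proof (rule bij_betw_byWitness[where f' = ?glue])
    show "\<forall>f\<in>?P. ?glue (?split f) = f"
    proof
      fix f assume "f \<in> ?P"
      then have "f \<in> extensional (V - {c})" by (rule ext)
      then show "?glue (?split f) = f" using K by (auto simp: fun_eq_iff extensional_def)
    qed
    show "\<forall>q\<in>forest_maps ?S {c} \<times> ?B. ?split (?glue q) = q"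
      by (auto simp: forest_maps_def PiE_iff extensional_def fun_eq_iff)
    show "?split ` ?P \<subseteq> forest_maps ?S {c} \<times> ?B"
      using restrict_parent_map[OF K adj] by auto
    show "?glue ` (forest_maps ?S {c} \<times> ?B) \<subseteq> ?P"
    proof (rule image_subsetI)
      fix q assume "q \<in> forest_maps ?S {c} \<times> ?B"
      then obtain g f where q: "q = (g, restrict f (V - K))"
        and g: "g \<in> forest_maps ?S {c}" and f: "f \<in> ?P" by blast
      have "?glue q = (\<lambda>v. if v \<in> ?S then g v else f v)"
        using ext[OF f] K by (auto simp: q fun_eq_iff extensional_def)
      then show "?glue q \<in> ?P" using glue_parent_map[OF K adj g f] by simp
    qed
  qed
  then show ?thesis by (simp add: bij_betw_same_card card_cartesian_product)
qed

lemma card_pow_dvd_num_spanning_trees: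
  assumes K: "finite K" "c \<in> K" "K \<subseteq> V" and E: "edges_within V E"
    and adj: "\<And>y z. y \<in> K - {c} \<Longrightarrow> edge_rel E y z \<longleftrightarrow> z \<in> K \<and> z \<noteq> y"
  shows "card K ^ (card K - 2) dvd num_spanning_trees V E"
proof -
  define n where "n = card (K - {c})"
  have n: "card K = Suc n" "card (K - {c}) = n"
    using K card_Suc_Diff1[OF K(1,2)] by (simp_all add: n_def)
  have "Suc n * card (forest_maps (K - {c}) {c}) = Suc n ^ n"
    using card_forest_maps[of "K - {c}" "{c}"] K n by simp
  also have "\<dots> = Suc n * Suc n ^ (n - 1)" by (cases n) simp_all
  finally have "card (forest_maps (K - {c}) {c}) = Suc n ^ (n - 1)"
    by (metis mult_left_cancel nat.distinct(1))
  then have "card (forest_maps (K - {c}) {c}) = card K ^ (card K - 2)"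
    using n by simp
  moreover have "num_spanning_trees V E = card (parent_maps V E c)"
    using K E by (intro num_spanning_trees_eq_card_parent_maps) auto
  ultimately show ?thesis using card_parent_maps_eq_mult[OF K(2,3) adj] by simp
qed

section \<open>The power graph\<close>

lemma edge_rel_power_graph_edges:
  "edge_rel (power_graph_edges G) a b \<longleftrightarrow> a \<in> carrier G \<and> b \<in> carrier G \<and> a \<noteq> b \<and> power_adj G a b"
proof
  assume "edge_rel (power_graph_edges G) a b"
  then obtain u v where "a \<noteq> b" "{a, b} = {u, v}" "u \<in> carrier G" "v \<in> carrier G" "power_adj G u v"
    by (auto simp: edge_rel_def power_graph_edges_def graph_edges_def)
  then show "a \<in> carrier G \<and> b \<in> carrier G \<and> a \<noteq> b \<and> power_adj G a b"
    by (auto simp: doubleton_eq_iff power_adj_def)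
qed (auto simp: edge_rel_def power_graph_edges_def graph_edges_def)

lemma edges_within_power_graph_edges: "edges_within (carrier G) (power_graph_edges G)"
  by (auto simp: edges_within_def power_graph_edges_def graph_edges_def)

context group
begin

lemma ord_dvd_ord_of_mem_generate:
  assumes fin: "finite (carrier G)" and x: "x \<in> carrier G" and y: "y \<in> generate G {x}"
  shows "ord y dvd ord x"
proof -
  obtain k :: nat where k: "y = x [^] k"
    using y generate_pow_on_finite_carrier[OF fin x] by blast
  have "y [^] ord x = (x [^] ord x) [^] k" using x by (simp only: k nat_pow_pow mult.commute)
  then have "y [^] ord x = \<one>" using x by simp
  then show ?thesis using x by (simp add: k pow_eq_id)
qed

lemma generate_singleton_eq_of_ord_eq:
  assumes fin: "finite (carrier G)" and x: "x \<in> carrier G"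
    and y: "y \<in> generate G {x}" and ord: "ord y = ord x"
  shows "generate G {y} = generate G {x}"
proof -
  have Hx: "subgroup (generate G {x}) G" using x by (intro generate_is_subgroup) auto
  then have yG: "y \<in> carrier G" using y subgroup.subset by blast
  have "generate G {y} \<subseteq> generate G {x}" using generate_subgroup_incl[OF _ Hx] y by simp
  moreover have "card (generate G {y}) = card (generate G {x})"
    using generate_pow_card[OF yG] generate_pow_card[OF x] ord by simp
  moreover have "finite (generate G {x})"
    using fin subgroup.subset[OF Hx] finite_subset by blast
  ultimately show ?thesis using card_subset_eq by blast
qed

lemma power_graph_edge_iff_mem_max_prime_cyclic:
  assumes fin: "finite (carrier G)" and p: "Factorial_Ring.prime p" "p \<in> max_elem_orders G"
    and x: "x \<in> carrier G" "ord x = p" and y: "y \<in> generate G {x} - {\<one>}"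
  shows "edge_rel (power_graph_edges G) y z \<longleftrightarrow> z \<in> generate G {x} \<and> z \<noteq> y"
proof -
  let ?H = "generate G {x}"
  have H: "subgroup ?H G" using x by (intro generate_is_subgroup) auto
  have yG: "y \<in> carrier G" using y subgroup.subset[OF H] by blast
  have "ord y dvd p" using ord_dvd_ord_of_mem_generate[OF fin x(1)] y x(2) by auto
  moreover have "ord y \<noteq> 1" using y yG ord_eq_1 by auto
  ultimately have "ord y = p" using p(1) by (auto simp: prime_nat_iff)
  then have Hy: "generate G {y} = ?H"
    using generate_singleton_eq_of_ord_eq[OF fin x(1)] y x(2) by auto
  have below: "generate G {z} \<subseteq> ?H \<longleftrightarrow> z \<in> ?H" for z
    using generate_subgroup_incl[OF _ H, of "{z}"] generate.incl[of z "{z}" G] by auto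
  have above: "z \<in> ?H" if z: "z \<in> carrier G" "?H \<subseteq> generate G {z}" for z
  proof -
    have xz: "x \<in> generate G {z}" using z(2) generate.incl[of x "{x}" G] by auto
    then have "p dvd ord z" using ord_dvd_ord_of_mem_generate[OF fin z(1) xz] x(2) by simp
    then have "ord z = p"
      using p(2) z(1) x by (auto simp: max_elem_orders_def elem_orders_def)
    then have "?H = generate G {z}"
      using generate_singleton_eq_of_ord_eq[OF fin z(1) xz] x(2) by simp
    then show ?thesis using generate.incl[of z "{z}" G] by simp
  qed
  show ?thesis
    unfolding edge_rel_power_graph_edges power_adj_def Hy
    using below above yG subgroup.subset[OF H] by blast
qed

end

theorem lemma3p5:
  fixes G :: "('a, 'b) monoid_scheme" and p :: nat
  assumes "group G" and "finite (carrier G)"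
    and "p \<in> prime_divs G" and "p \<in> max_elem_orders G"
  shows "p ^ (p - 2) dvd kappa G"
proof -
  interpret group G by fact
  have "Factorial_Ring.prime p" using assms(3) by (simp add: prime_divs_def)
  obtain x where x: "x \<in> carrier G" "ord x = p"
    using assms(4) by (auto simp: max_elem_orders_def elem_orders_def)
  let ?H = "generate G {x}"
  have H: "subgroup ?H G" using x by (intro generate_is_subgroup) auto
  have "card ?H = p" using generate_pow_card[OF x(1)] x(2) by simp
  moreover have "card ?H ^ (card ?H - 2) dvd num_spanning_trees (carrier G) (power_graph_edges G)"
  proof (rule card_pow_dvd_num_spanning_trees)
    show "finite ?H" using assms(2) subgroup.subset[OF H] finite_subset by blast
    show "\<one>\<^bsub>G\<^esub> \<in> ?H" "?H \<subseteq> carrier G" using subgroup.one_closed[OF H] subgroup.subset[OF H] .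
    show "edges_within (carrier G) (power_graph_edges G)" by (rule edges_within_power_graph_edges)
    show "edge_rel (power_graph_edges G) y z \<longleftrightarrow> z \<in> ?H \<and> z \<noteq> y" if "y \<in> ?H - {\<one>\<^bsub>G\<^esub>}" for y z
      using power_graph_edge_iff_mem_max_prime_cyclic[OF assms(2) \<open>Factorial_Ring.prime p\<close> assms(4) x that] .
  qed
  ultimately show ?thesis by (simp add: kappa_def)
qed

end
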